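(* Let $n>1$ be an odd integer and let $M$ be either $(n+1)/2$ or $n-1$. Then \[ \sum_{k=0}^{M}[4k-1]\frac{(aq^{-1},q^{-1}/a,q^{-1}/b,cq^{-1},dq^{-1},q^{-1};q^2)_k}{(q^2/a,aq^2,bq^2,q^2/c,q^2/d,q^2;q^2)_k}\bigg(\frac{bq^7}{cd}\bigg)^k \equiv0\pmod{[n]}. \]
   Context: Here $q,a,b,c,d$ are indeterminates. The $q$-shifted factorial is $(x;q)_0=1$, $(x;q)_k=(1-x)(1-xq)\cdots(1-xq^{k-1})$ for $k\ge1$, and $(x_1,\dots,x_m;q)_k=(x_1;q)_k\cdots(x_m;q)_k$. The $q$-integer is $[m]=(1-q^m)/(1-q)$, which equals the product of the cyclotomic polynomials $\Phi_t(q)$ over divisors $t>1$ of $m$. A congruence $A\equiv B$ modulo a polynomial $P$ between rational functions means that $A-B$ is a rational function whose numerator is divisible by $P$ and whose denominator is coprime to $P$. *)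

theory Defs
  imports "HOL-Computational_Algebra.Polynomial_Factorial"
begin

text \<open>The polynomial ring Z[q,d,c,b,a] in five indeterminates, realised as iterated
  univariate polynomial rings (q outermost), and its fraction field Q(q,a,b,c,d).\<close>

type_synonym mpoly5 = "int poly poly poly poly poly"
type_synonym ratfun5 = "mpoly5 fract"

definition qX :: mpoly5 where "qX = [:0, 1:]"
definition dX :: mpoly5 where "dX = [:[:0, 1:]:]"
definition cX :: mpoly5 where "cX = [:[:[:0, 1:]:]:]"
definition bX :: mpoly5 where "bX = [:[:[:[:0, 1:]:]:]:]"
definition aX :: mpoly5 where "aX = [:[:[:[:[:0, 1:]:]:]:]:]"

definition qv :: ratfun5 where "qv = to_fract qX"
definition av :: ratfun5 where "av = to_fract aX"
definition bv :: ratfun5 where "bv = to_fract bX"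
definition cv :: ratfun5 where "cv = to_fract cX"
definition dv :: ratfun5 where "dv = to_fract dX"

definition qpoch :: "'a::field \<Rightarrow> 'a \<Rightarrow> nat \<Rightarrow> 'a" where
  "qpoch x p k = (\<Prod>j<k. 1 - x * p ^ j)"

definition qint :: "int \<Rightarrow> ratfun5" where
  "qint m = (1 - qv powi m) / (1 - qv)"

definition qintP :: "nat \<Rightarrow> mpoly5" where
  "qintP n = (\<Sum>i<n. qX ^ i)"

definition qcong :: "ratfun5 \<Rightarrow> ratfun5 \<Rightarrow> mpoly5 \<Rightarrow> bool" where
  "qcong A B P \<longleftrightarrow> (\<exists>N D. D \<noteq> 0 \<and> A - B = Fract N D \<and> P dvd N \<and> coprime D P)"

end

theory Submission
  imports Defs "HOL-Computational_Algebra.Squarefree"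
begin

text \<open>Since [n] is squarefree, it suffices to show that the sum lies in the maximal ideal of the
  local ring at every prime divisor p of [n] in Z[q,a,b,c,d]. Such a p divides the cyclotomic
  polynomial of some odd t \<ge> 3 dividing n, so q^t \<equiv> 1 modulo p, while a, b, c, d remain units
  that are not n-th roots of unity modulo p. Write the k-th summand as c(k) = [4k-1] h(k), where
  h(k) is the product of the first k ratios of consecutive hypergeometric terms, and put
  N = (t+1)/2. Modulo p the ratios are t-periodic, whence c(jt+r) \<equiv> h(jt) c(r) for r < t with
  h(jt) p-integral; c(r) \<equiv> 0 for N < r < t because the N-th ratio contains the factor 1 - q^t;
  and c(N-r) \<equiv> -c(r) for r \<le> N, which follows from h(N) \<equiv> q^(-1) and a reflection relating
  the ratios with indices r and N-1-r. So every block sum c(jt) + ... + c(jt+R) with N \<le> R < t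
  vanishes modulo p, and both values of M are of the form Jt + R with such an R.\<close>

section \<open>Localization at a prime element\<close>

locale prime_localization =
  fixes p :: "'a :: idom"
  assumes prime: "prime_elem p"
begin

text \<open>The local ring of \<open>'a\<close> at the prime ideal \<open>(p)\<close>, inside the fraction field,
  and its maximal ideal.\<close>

definition loc_int :: "'a fract \<Rightarrow> bool" where
  "loc_int x \<longleftrightarrow> (\<exists>a b. \<not> p dvd b \<and> x = Fract a b)"

definition loc_dvd :: "'a fract \<Rightarrow> bool" where
  "loc_dvd x \<longleftrightarrow> (\<exists>a b. p dvd a \<and> \<not> p dvd b \<and> x = Fract a b)"

definition loc_unit :: "'a fract \<Rightarrow> bool" where
  "loc_unit x \<longleftrightarrow> loc_int x \<and> \<not> loc_dvd x"

definition loc_cong :: "'a fract \<Rightarrow> 'a fract \<Rightarrow> bool" where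
  "loc_cong x y \<longleftrightarrow> loc_dvd (x - y)"

lemma not_dvd_mult: "\<not> p dvd a \<Longrightarrow> \<not> p dvd b \<Longrightarrow> \<not> p dvd a * b"
  using prime prime_elem_dvd_mult_iff by blast

lemma loc_intE:
  assumes "loc_int x"
  obtains a b where "\<not> p dvd b" "b \<noteq> 0" "x = Fract a b"
  using assms by (auto simp: loc_int_def)

lemma loc_dvdE:
  assumes "loc_dvd x"
  obtains a b where "p dvd a" "\<not> p dvd b" "b \<noteq> 0" "x = Fract a b"
  using assms by (auto simp: loc_dvd_def)

lemma loc_int_add [intro]:
  assumes "loc_int x" "loc_int y"
  shows "loc_int (x + y)"
proof -
  obtain a b c d where "\<not> p dvd b" "b \<noteq> 0" "x = Fract a b" "\<not> p dvd d" "d \<noteq> 0" "y = Fract c d"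
    using assms by (meson loc_intE)
  then show ?thesis
    unfolding loc_int_def by (intro exI[of _ "a * d + c * b"] exI[of _ "b * d"]) (simp add: not_dvd_mult)
qed

lemma loc_int_mult [intro]:
  assumes "loc_int x" "loc_int y"
  shows "loc_int (x * y)"
proof -
  obtain a b c d where "\<not> p dvd b" "x = Fract a b" "\<not> p dvd d" "y = Fract c d"
    using assms by (meson loc_intE)
  then show ?thesis
    unfolding loc_int_def by (intro exI[of _ "a * c"] exI[of _ "b * d"]) (simp add: not_dvd_mult)
qed

lemma loc_int_minus [intro]: "loc_int x \<Longrightarrow> loc_int (- x)"
  unfolding loc_int_def by (metis minus_fract)

lemma loc_int_diff [intro]: "loc_int x \<Longrightarrow> loc_int y \<Longrightarrow> loc_int (x - y)"
  by (metis diff_conv_add_uminus loc_int_add loc_int_minus)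

lemma loc_int_to_fract [simp, intro]: "loc_int (to_fract a)"
  using prime unfolding loc_int_def to_fract_def prime_elem_def by auto

lemma loc_int_0 [simp, intro]: "loc_int 0" and loc_int_1 [simp, intro]: "loc_int 1"
  using loc_int_to_fract[of 0] loc_int_to_fract[of 1] by simp_all

lemma loc_int_of_nat [simp, intro]: "loc_int (of_nat k)"
  using loc_int_to_fract[of "of_nat k"] by (simp add: of_nat_fract to_fract_def)

lemma loc_int_power [intro]: "loc_int x \<Longrightarrow> loc_int (x ^ k)"
  by (induction k) auto

lemma loc_int_sum [intro]: "(\<And>i. i \<in> I \<Longrightarrow> loc_int (f i)) \<Longrightarrow> loc_int (sum f I)"
  by (induction I rule: infinite_finite_induct) auto

lemma loc_int_prod [intro]: "(\<And>i. i \<in> I \<Longrightarrow> loc_int (f i)) \<Longrightarrow> loc_int (prod f I)"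
  by (induction I rule: infinite_finite_induct) auto

lemma loc_int_prod_list [intro]: "(\<And>x. x \<in> set xs \<Longrightarrow> loc_int (f x)) \<Longrightarrow> loc_int (\<Prod>x\<leftarrow>xs. f x)"
  by (induction xs) auto

lemma loc_dvd_imp_loc_int: "loc_dvd x \<Longrightarrow> loc_int x"
  by (auto simp: loc_dvd_def loc_int_def)

lemma loc_dvd_0 [simp, intro]: "loc_dvd 0"
  using prime unfolding loc_dvd_def prime_elem_def
  by (intro exI[of _ 0] exI[of _ 1]) (simp add: Zero_fract_def)

lemma loc_dvd_add [intro]:
  assumes "loc_dvd x" "loc_dvd y"
  shows "loc_dvd (x + y)"
proof -
  obtain a b c d where "p dvd a" "\<not> p dvd b" "b \<noteq> 0" "x = Fract a b"
    "p dvd c" "\<not> p dvd d" "d \<noteq> 0" "y = Fract c d"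
    using assms by (meson loc_dvdE)
  then show ?thesis
    unfolding loc_dvd_def by (intro exI[of _ "a * d + c * b"] exI[of _ "b * d"]) (simp add: not_dvd_mult)
qed

lemma loc_dvd_mult_left:
  assumes "loc_int x" "loc_dvd y"
  shows "loc_dvd (x * y)"
proof -
  obtain a b c d where "\<not> p dvd b" "x = Fract a b" "p dvd c" "\<not> p dvd d" "y = Fract c d"
    using assms by (meson loc_intE loc_dvdE)
  then show ?thesis
    unfolding loc_dvd_def by (intro exI[of _ "a * c"] exI[of _ "b * d"]) (simp add: not_dvd_mult)
qed

lemma loc_dvd_mult_right: "loc_dvd x \<Longrightarrow> loc_int y \<Longrightarrow> loc_dvd (x * y)"
  by (metis loc_dvd_mult_left mult.commute)

lemma loc_dvd_minus [intro]: "loc_dvd x \<Longrightarrow> loc_dvd (- x)"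
  unfolding loc_dvd_def by (metis minus_fract dvd_minus_iff)

lemma loc_dvd_minus_iff [simp]: "loc_dvd (- x) \<longleftrightarrow> loc_dvd x"
  by (metis loc_dvd_minus minus_minus)

lemma loc_dvd_diff [intro]: "loc_dvd x \<Longrightarrow> loc_dvd y \<Longrightarrow> loc_dvd (x - y)"
  by (metis diff_conv_add_uminus loc_dvd_add loc_dvd_minus)

lemma loc_dvd_sum [intro]: "(\<And>i. i \<in> I \<Longrightarrow> loc_dvd (f i)) \<Longrightarrow> loc_dvd (sum f I)"
  by (induction I rule: infinite_finite_induct) auto

lemma loc_dvd_to_fract_iff [simp]: "loc_dvd (to_fract a) \<longleftrightarrow> p dvd a"
proof
  assume "loc_dvd (to_fract a)"
  then obtain c d where "p dvd c" "\<not> p dvd d" "d \<noteq> 0" "to_fract a = Fract c d"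
    by (rule loc_dvdE)
  then have "a * d = c" and "\<not> p dvd d"
    by (simp_all add: to_fract_def eq_fract)
  with \<open>p dvd c\<close> show "p dvd a"
    using prime prime_elem_dvd_mult_iff by blast
next
  assume "p dvd a"
  with prime show "loc_dvd (to_fract a)"
    unfolding loc_dvd_def to_fract_def prime_elem_def by auto
qed

lemma not_loc_dvd_1 [simp]: "\<not> loc_dvd 1"
  using loc_dvd_to_fract_iff[of 1] prime by (simp add: prime_elem_def)

lemma loc_dvd_mult_iff:
  assumes "loc_int x" "loc_int y"
  shows "loc_dvd (x * y) \<longleftrightarrow> loc_dvd x \<or> loc_dvd y"
proof
  assume "loc_dvd (x * y)"
  then obtain e f where "p dvd e" "\<not> p dvd f" "f \<noteq> 0" "x * y = Fract e f"
    by (rule loc_dvdE)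
  moreover obtain a b c d where "\<not> p dvd b" "b \<noteq> 0" "x = Fract a b" "\<not> p dvd d" "d \<noteq> 0" "y = Fract c d"
    using assms by (meson loc_intE)
  ultimately have "a * c * f = e * (b * d)" and "\<not> p dvd f"
    by (simp_all add: eq_fract)
  moreover have "p dvd e * (b * d)"
    using \<open>p dvd e\<close> by (rule dvd_mult2)
  ultimately have "p dvd a * c"
    using prime prime_elem_dvd_mult_iff by (metis (no_types))
  then have "p dvd a \<or> p dvd c"
    using prime prime_elem_dvd_mult_iff by blast
  with \<open>\<not> p dvd b\<close> \<open>x = Fract a b\<close> \<open>\<not> p dvd d\<close> \<open>y = Fract c d\<close> show "loc_dvd x \<or> loc_dvd y"
    unfolding loc_dvd_def by blast
qed (use assms loc_dvd_mult_left loc_dvd_mult_right in auto)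

lemma loc_unit_imp_nonzero: "loc_unit x \<Longrightarrow> x \<noteq> 0"
  by (auto simp: loc_unit_def)

lemma loc_unit_1 [simp, intro]: "loc_unit 1"
  by (simp add: loc_unit_def)

lemma loc_unit_mult [intro]: "loc_unit x \<Longrightarrow> loc_unit y \<Longrightarrow> loc_unit (x * y)"
  by (auto simp: loc_unit_def loc_dvd_mult_iff)

lemma loc_unit_power [intro]: "loc_unit x \<Longrightarrow> loc_unit (x ^ k)"
  by (induction k) auto

lemma loc_unit_prod_list [intro]: "(\<And>x. x \<in> set xs \<Longrightarrow> loc_unit (f x)) \<Longrightarrow> loc_unit (\<Prod>x\<leftarrow>xs. f x)"
  by (induction xs) auto

lemma loc_unit_prod [intro]: "(\<And>i. i \<in> I \<Longrightarrow> loc_unit (f i)) \<Longrightarrow> loc_unit (prod f I)"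
  by (induction I rule: infinite_finite_induct) auto

lemma loc_unit_inverse [intro]:
  assumes "loc_unit x"
  shows "loc_unit (inverse x)"
proof -
  obtain a b where "\<not> p dvd b" "x = Fract a b"
    using assms by (auto simp: loc_unit_def elim: loc_intE)
  moreover from this have "\<not> p dvd a"
    using assms unfolding loc_unit_def loc_dvd_def by blast
  ultimately have "loc_int (inverse x)"
    unfolding loc_int_def by auto
  moreover have "\<not> loc_dvd (inverse x)"
  proof
    assume "loc_dvd (inverse x)"
    then have "loc_dvd (x * inverse x)"
      using assms loc_dvd_mult_left unfolding loc_unit_def by blast
    then show False
      using assms by (simp add: loc_unit_imp_nonzero)
  qed
  ultimately show ?thesis
    by (simp add: loc_unit_def)
qed

lemma loc_unit_power_int [intro]: "loc_unit x \<Longrightarrow> loc_unit (x powi m)"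
  by (auto simp: power_int_def)

lemma loc_unit_divide [intro]: "loc_unit x \<Longrightarrow> loc_unit y \<Longrightarrow> loc_unit (x / y)"
  by (simp add: divide_inverse loc_unit_inverse loc_unit_mult)

lemma loc_unit_imp_loc_int: "loc_unit x \<Longrightarrow> loc_int x"
  by (simp add: loc_unit_def)

lemma loc_int_divide [intro]: "loc_int x \<Longrightarrow> loc_unit y \<Longrightarrow> loc_int (x / y)"
  by (simp add: divide_inverse loc_int_mult loc_unit_imp_loc_int loc_unit_inverse)

lemma loc_dvd_mult_unit_iff:
  assumes "loc_unit u"
  shows "loc_dvd (u * x) \<longleftrightarrow> loc_dvd x"
proof
  assume "loc_dvd (u * x)"
  then have "loc_dvd (inverse u * (u * x))"
    using loc_dvd_mult_left[OF loc_unit_imp_loc_int[OF loc_unit_inverse[OF assms]]] by blast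
  then show "loc_dvd x"
    using loc_unit_imp_nonzero[OF assms] by (simp add: field_simps)
qed (use assms loc_dvd_mult_left loc_unit_imp_loc_int in blast)

lemma loc_dvd_prod:
  assumes "finite I" "i \<in> I" "loc_dvd (f i)" "\<And>j. j \<in> I \<Longrightarrow> loc_int (f j)"
  shows "loc_dvd (prod f I)"
proof -
  have "prod f I = f i * prod f (I - {i})"
    using assms by (simp add: prod.remove)
  moreover have "loc_int (prod f (I - {i}))"
    using assms(4) by (intro loc_int_prod) auto
  ultimately show ?thesis
    using assms(3) loc_dvd_mult_right by simp
qed

lemma loc_cong_refl [simp, intro]: "loc_cong x x"
  by (simp add: loc_cong_def)

lemma loc_cong_sym: "loc_cong x y \<Longrightarrow> loc_cong y x"
  unfolding loc_cong_def using loc_dvd_minus[of "x - y"] by simp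

lemma loc_cong_trans [trans]: "loc_cong x y \<Longrightarrow> loc_cong y z \<Longrightarrow> loc_cong x z"
  unfolding loc_cong_def using loc_dvd_add[of "x - y" "y - z"] by simp

lemma loc_cong_add: "loc_cong x y \<Longrightarrow> loc_cong x' y' \<Longrightarrow> loc_cong (x + x') (y + y')"
  unfolding loc_cong_def using loc_dvd_add[of "x - y" "x' - y'"] by (simp add: add_diff_add)

lemma loc_cong_diff:
  assumes "loc_cong x y" "loc_cong x' y'"
  shows "loc_cong (x - x') (y - y')"
proof -
  have "(x - x') - (y - y') = (x - y) - (x' - y')"
    by (simp add: algebra_simps)
  then show ?thesis
    using assms loc_dvd_diff unfolding loc_cong_def by metis
qed

lemma loc_cong_loc_int: "loc_cong x y \<Longrightarrow> loc_int x \<Longrightarrow> loc_int y"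
  unfolding loc_cong_def using loc_int_diff[of x "x - y"] loc_dvd_imp_loc_int by auto

lemma loc_cong_loc_dvd: "loc_cong x y \<Longrightarrow> loc_dvd x \<Longrightarrow> loc_dvd y"
  unfolding loc_cong_def using loc_dvd_diff[of x "x - y"] by auto

lemma loc_cong_loc_unit: "loc_cong x y \<Longrightarrow> loc_unit x \<Longrightarrow> loc_unit y"
  by (meson loc_cong_loc_dvd loc_cong_loc_int loc_cong_sym loc_unit_def)

lemma loc_cong_mult_left: "loc_cong x y \<Longrightarrow> loc_int c \<Longrightarrow> loc_cong (c * x) (c * y)"
  unfolding loc_cong_def using loc_dvd_mult_left[of c "x - y"] by (simp add: right_diff_distrib)

lemma loc_cong_mult:
  assumes "loc_cong x y" "loc_cong x' y'" "loc_int x" "loc_int x'"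
  shows "loc_cong (x * x') (y * y')"
proof -
  have "loc_int y"
    using assms loc_cong_loc_int by blast
  have "x * x' - y * y' = x * (x' - y') + (x - y) * y'"
    by (simp add: algebra_simps)
  moreover have "loc_dvd (x * (x' - y'))" "loc_dvd ((x - y) * y')"
    using assms loc_cong_loc_int[of x' y'] loc_dvd_mult_left loc_dvd_mult_right
    unfolding loc_cong_def by auto
  ultimately show ?thesis
    unfolding loc_cong_def by (metis loc_dvd_add)
qed

lemma loc_cong_power: "loc_cong x y \<Longrightarrow> loc_int x \<Longrightarrow> loc_cong (x ^ k) (y ^ k)"
  by (induction k) (auto intro: loc_cong_mult)

lemma loc_cong_inverse:
  assumes "loc_cong x y" "loc_unit x"
  shows "loc_cong (inverse x) (inverse y)"
proof -
  have "loc_unit y"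
    using assms loc_cong_loc_unit by blast
  then have "inverse x - inverse y = inverse x * inverse y * (y - x)"
    using assms by (simp add: loc_unit_imp_nonzero field_simps)
  moreover have "loc_dvd (y - x)"
    using assms loc_cong_sym unfolding loc_cong_def by blast
  ultimately show ?thesis
    unfolding loc_cong_def using assms \<open>loc_unit y\<close>
    by (simp add: loc_dvd_mult_left loc_unit_imp_loc_int loc_unit_inverse loc_unit_mult)
qed

lemma loc_cong_divide:
  "loc_cong x y \<Longrightarrow> loc_cong u v \<Longrightarrow> loc_int x \<Longrightarrow> loc_unit u \<Longrightarrow> loc_cong (x / u) (y / v)"
  unfolding divide_inverse
  by (intro loc_cong_mult loc_cong_inverse) (auto simp: loc_unit_imp_loc_int loc_unit_inverse)

lemma loc_cong_cancel:
  assumes "loc_cong (u * x) (u * y)" "loc_unit u"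
  shows "loc_cong x y"
  using assms loc_dvd_mult_unit_iff[of u "x - y"] unfolding loc_cong_def by (simp add: right_diff_distrib)

lemma loc_cong_sum: "(\<And>i. i \<in> I \<Longrightarrow> loc_cong (f i) (g i)) \<Longrightarrow> loc_cong (sum f I) (sum g I)"
  by (induction I rule: infinite_finite_induct) (auto intro: loc_cong_add)

lemma loc_cong_prod:
  "(\<And>i. i \<in> I \<Longrightarrow> loc_cong (f i) (g i) \<and> loc_int (f i)) \<Longrightarrow> loc_cong (prod f I) (prod g I)"
  by (induction I rule: infinite_finite_induct) (auto intro: loc_cong_mult)

lemma loc_cong_prod_list:
  "(\<And>x. x \<in> set xs \<Longrightarrow> loc_cong (f x) (g x) \<and> loc_int (f x)) \<Longrightarrow>
    loc_cong (\<Prod>x\<leftarrow>xs. f x) (\<Prod>x\<leftarrow>xs. g x)"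
  by (induction xs) (auto intro: loc_cong_mult)

definition loc_order :: "'a fract \<Rightarrow> nat" where
  "loc_order x = (LEAST t. 0 < t \<and> loc_cong (x ^ t) 1)"

lemma loc_cong_power_one_iff:
  assumes x: "loc_unit x" and n: "0 < n" "loc_cong (x ^ n) 1"
  shows "loc_cong (x ^ m) 1 \<longleftrightarrow> loc_order x dvd m"
proof -
  define t where "t = loc_order x"
  have t: "0 < t" "loc_cong (x ^ t) 1"
    using LeastI[of "\<lambda>t. 0 < t \<and> loc_cong (x ^ t) 1" n] n by (auto simp: t_def loc_order_def)
  have multiple: "loc_cong (x ^ (t * u)) 1" for u
    using loc_cong_power[OF t(2), of u] x by (simp add: power_mult loc_unit_imp_loc_int loc_unit_power)
  show ?thesis
    unfolding t_def[symmetric]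
  proof
    assume m: "loc_cong (x ^ m) 1"
    have "loc_cong (x ^ (t * (m div t)) * x ^ (m mod t)) (1 * x ^ (m mod t))"
      using multiple x by (intro loc_cong_mult) (auto simp: loc_unit_imp_loc_int loc_unit_power)
    then have "loc_cong (x ^ m) (x ^ (m mod t))"
      by (simp flip: power_add)
    then have rest: "loc_cong (x ^ (m mod t)) 1"
      using m loc_cong_sym loc_cong_trans by blast
    have "m mod t = 0"
    proof (rule ccontr)
      assume "m mod t \<noteq> 0"
      with rest have "t \<le> m mod t"
        unfolding t_def loc_order_def by (intro Least_le) simp
      with t(1) show False
        by (meson mod_less_divisor not_le)
    qed
    then show "t dvd m"
      by auto
  qed (use multiple in auto)
qed

lemma loc_cong_power_int_one_iff:
  assumes "loc_unit x" "0 < n" "loc_cong (x ^ n) 1"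
  shows "loc_cong (x powi m) 1 \<longleftrightarrow> int (loc_order x) dvd m"
proof (cases "0 \<le> m")
  case True
  then obtain k where "m = int k"
    by (metis nonneg_eq_int)
  then show ?thesis
    using loc_cong_power_one_iff[OF assms, of k] by simp
next
  case False
  then obtain k where m: "m = - int k"
    by (metis minus_minus nonneg_eq_int neg_0_le_iff_le nle_le)
  have unit: "loc_unit (x ^ k)" "loc_unit (inverse (x ^ k))"
    using assms(1) by auto
  have "loc_cong (inverse (x ^ k)) 1 \<longleftrightarrow> loc_cong (x ^ k) 1"
    using loc_cong_inverse[OF _ unit(1), of 1] loc_cong_inverse[OF _ unit(2), of 1] by auto
  then show ?thesis
    using loc_cong_power_one_iff[OF assms, of k] by (simp add: m power_int_minus)
qed

lemma loc_cong_power_int: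
  assumes "loc_unit x" "0 < n" "loc_cong (x ^ n) 1" "int (loc_order x) dvd m - m'"
  shows "loc_cong (x powi m) (x powi m')"
proof -
  have "loc_cong (x powi (m - m')) 1"
    using assms loc_cong_power_int_one_iff by blast
  then have "loc_cong (x powi m' * x powi (m - m')) (x powi m' * 1)"
    using assms(1) by (intro loc_cong_mult_left) (auto simp: loc_unit_imp_loc_int loc_unit_power_int)
  then show ?thesis
    using loc_unit_imp_nonzero[OF assms(1)] by (simp flip: power_int_add)
qed

lemma loc_int_geometric_quotient:
  assumes "loc_int x" "loc_cong x 1" "\<not> loc_dvd (of_nat b)"
  shows "loc_int ((1 - x ^ a) / (1 - x ^ b))"
proof (cases "x = 1")
  case False
  have "loc_cong (\<Sum>i<b. x ^ i) (\<Sum>i<b. 1)"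
    using assms loc_cong_power[of x 1] by (intro loc_cong_sum) simp
  then have "loc_cong (\<Sum>i<b. x ^ i) (of_nat b)"
    by simp
  moreover have "loc_unit (of_nat b)"
    using assms(3) by (simp add: loc_unit_def)
  ultimately have "loc_unit (\<Sum>i<b. x ^ i)"
    by (rule loc_cong_loc_unit[OF loc_cong_sym])
  moreover have "(1 - x ^ a) / (1 - x ^ b) = (\<Sum>i<a. x ^ i) / (\<Sum>i<b. x ^ i)"
    unfolding one_diff_power_eq using False by simp
  ultimately show ?thesis
    using assms by auto
qed simp

end

lemma const_dvd_imp_unit:
  fixes p f :: "'a :: idom poly"
  assumes "p dvd f" "coeff f 0 dvd 1" "p dvd [:w:]" "w \<noteq> 0"
  shows "p dvd 1"
proof -
  have "degree p = 0"
    using dvd_imp_degree_le[OF assms(3)] assms(4) by simp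
  then obtain c where p: "p = [:c:]"
    by (rule degree_eq_zeroE)
  obtain g where "f = p * g"
    using assms(1) by blast
  then have "coeff f 0 = c * coeff g 0"
    by (simp add: p)
  then have "c dvd 1"
    using assms(2) dvd_trans[of c "coeff f 0" 1] by simp
  then show ?thesis
    by (simp add: p is_unit_const_poly_iff)
qed

lemma var_dvd_imp_unit:
  fixes p f :: "'a :: idom poly"
  assumes "p dvd f" "coeff f 0 dvd 1" "p dvd [:0, 1:]"
  shows "p dvd 1"
proof -
  obtain a g where f: "f = pCons a g"
    by (cases f)
  then have "f = [:coeff f 0:] + [:0, 1:] * g"
    by simp
  then have "p dvd [:coeff f 0:]"
    using assms(1,3) by (metis add_diff_cancel_right' dvd_diff dvd_mult2)
  moreover have "coeff f 0 \<noteq> 0"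
    using assms(2) by auto
  ultimately show ?thesis
    using assms(1,2) const_dvd_imp_unit by blast
qed

lemma squarefree_dvd_if_prime_divisors_dvd:
  fixes P N :: "'a :: factorial_semiring"
  assumes "squarefree P" "\<And>p. prime p \<Longrightarrow> p dvd P \<Longrightarrow> p dvd N"
  shows "P dvd N"
proof (cases "N = 0")
  case False
  have "P \<noteq> 0"
    using assms(1) by auto
  show ?thesis
  proof (rule multiplicity_le_imp_dvd[OF \<open>P \<noteq> 0\<close>])
    fix p :: 'a
    assume "prime p"
    show "multiplicity p P \<le> multiplicity p N"
    proof (cases "p dvd P")
      case True
      then have "multiplicity p P \<le> 1"
        using assms(1) \<open>P \<noteq> 0\<close> \<open>prime p\<close> squarefree_factorial_semiring'' by blast
      moreover have "0 < multiplicity p N"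
        using assms(2) True \<open>prime p\<close> False by (simp add: prime_multiplicity_gt_zero_iff)
      ultimately show ?thesis
        by simp
    qed (simp add: not_dvd_imp_multiplicity_0)
  qed
qed simp

lemma coprime_if_no_common_prime_divisor:
  fixes a b :: "'a :: factorial_semiring_gcd"
  assumes "a \<noteq> 0" "\<And>p. prime p \<Longrightarrow> p dvd a \<Longrightarrow> p dvd b \<Longrightarrow> False"
  shows "coprime a b"
proof (rule ccontr)
  assume "\<not> coprime a b"
  then have "\<not> is_unit (gcd a b)"
    using is_unit_gcd by blast
  then obtain p where "prime p" "p dvd gcd a b"
    using prime_divisor_exists assms(1) by (metis gcd_eq_0_iff)
  then show False
    using assms(2) by auto
qed

lemma fract_num_dvd_if_loc_dvd:
  fixes P :: "'a :: {factorial_ring_gcd, semiring_gcd_mult_normalize}" and S :: "'a fract"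
  assumes "squarefree P" "\<And>p. prime p \<Longrightarrow> p dvd P \<Longrightarrow> prime_localization.loc_dvd p S"
  shows "\<exists>N D. D \<noteq> 0 \<and> S = Fract N D \<and> P dvd N \<and> coprime D P"
proof -
  obtain N D where ND: "quot_of_fract S = (N, D)"
    by (cases "quot_of_fract S")
  then have S: "S = Fract N D" and cop: "coprime N D" and "D \<noteq> 0"
    using quot_to_fract_quot_of_fract[of S] quot_of_fract_in_normalized_fracts[of S]
    by (auto simp: quot_to_fract_def normalized_fracts_def)
  have local: "p dvd N \<and> \<not> p dvd D" if p: "prime p" "p dvd P" for p
  proof -
    interpret prime_localization p
      using p by unfold_locales simp
    obtain a b where "p dvd a" "\<not> p dvd b" "b \<noteq> 0" "S = Fract a b"
      using assms(2)[OF p] by (rule loc_dvdE)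
    then have "a * D = N * b"
      using S \<open>D \<noteq> 0\<close> by (simp add: eq_fract)
    then have "p dvd N * b"
      using \<open>p dvd a\<close> by (metis dvd_mult2)
    then have "p dvd N"
      using \<open>\<not> p dvd b\<close> p(1) prime_dvd_mult_iff by blast
    moreover have "\<not> p dvd D"
      using cop \<open>p dvd N\<close> p(1) coprime_common_divisor not_prime_unit by blast
    ultimately show ?thesis ..
  qed
  have "coprime D P"
    using \<open>D \<noteq> 0\<close> local by (blast intro: coprime_if_no_common_prime_divisor)
  moreover have "P dvd N"
    using assms(1) local by (blast intro: squarefree_dvd_if_prime_divisors_dvd)
  ultimately show ?thesis
    using S \<open>D \<noteq> 0\<close> by blast
qed

lemma to_fract_power: "to_fract (x ^ k) = to_fract x ^ k"
  by (induction k) simp_all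

lemma to_fract_of_nat: "to_fract (of_nat k) = of_nat k"
  by (simp add: to_fract_def of_nat_fract)

lemma prod_list_map_divide:
  "(\<Prod>x\<leftarrow>xs. f x / g x) = (\<Prod>x\<leftarrow>xs. f x) / (\<Prod>x\<leftarrow>xs. g x :: 'a :: field)"
  by (induction xs) simp_all

lemma prod_power_int:
  assumes "(x :: 'a :: field) \<noteq> 0"
  shows "(\<Prod>i\<in>I. x powi f i) = x powi (\<Sum>i\<in>I. f i)"
proof (induction I rule: infinite_finite_induct)
  case (insert a F)
  have "(\<Prod>i\<in>insert a F. x powi f i) = x powi f a * x powi (\<Sum>i\<in>F. f i)"
    using insert by simp
  also have "\<dots> = x powi (f a + (\<Sum>i\<in>F. f i))"
    using assms by (rule power_int_add[symmetric, OF disjI1])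
  also have "\<dots> = x powi (\<Sum>i\<in>insert a F. f i)"
    using insert by simp
  finally show ?case .
qed simp_all

lemma not_dvd_if_abs_less:
  fixes d m :: int
  assumes "m \<noteq> 0" "\<bar>m\<bar> < d"
  shows "\<not> d dvd m"
proof
  assume "d dvd m"
  then have "\<bar>d\<bar> \<le> \<bar>m\<bar>"
    by (rule dvd_imp_le_int[OF assms(1)])
  with assms(2) show False
    by simp
qed

lemma prod_lessThan_add: "(\<Prod>k<a + (b :: nat). f k) = (\<Prod>k<a. f k) * (\<Prod>r<b. f (a + r))"
  by (induction b) (simp_all add: ac_simps)

lemma sum_lessThan_add: "(\<Sum>k<a + (b :: nat). f k) = (\<Sum>k<a. f k) + (\<Sum>r<b. f (a + r))"
  by (induction b) (simp_all add: ac_simps)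

section \<open>The q-integer [n] and the terms of the sum\<close>

lemma coeff_qintP_0: "0 < n \<Longrightarrow> coeff (qintP n) 0 = 1"
  by (simp add: qintP_def coeff_sum qX_def coeff_0_power power_0_left)

lemma qintP_dvd_one_minus_qX_power: "qintP n dvd 1 - qX ^ n"
proof
  show "1 - qX ^ n = qintP n * (1 - qX)"
    by (simp add: qintP_def one_diff_power_eq mult.commute)
qed

lemma squarefree_qintP:
  assumes "0 < n"
  shows "squarefree (qintP n)"
proof -
  have coeff: "coeff (qintP n) 0 dvd 1"
    using coeff_qintP_0[OF assms] by simp
  have "\<not> p ^ 2 dvd qintP n" if "prime p" for p
  proof
    assume sq: "p ^ 2 dvd qintP n"
    then have "p * p dvd 1 - qX ^ n"
      using qintP_dvd_one_minus_qX_power by (metis dvd_trans power2_eq_square)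
    then obtain g where g: "1 - qX ^ n = p * p * g"
      by (elim dvdE)
    have "p dvd pderiv (1 - qX ^ n)"
      unfolding g by (simp add: pderiv_mult)
    moreover have "pderiv (1 - qX ^ n) = - ([:of_nat n:] * qX ^ (n - 1))"
      by (simp add: pderiv_diff pderiv_power qX_def pderiv_pCons)
    ultimately have "p dvd [:of_nat n:] * qX ^ (n - 1)"
      by (metis dvd_minus_iff)
    then have "p dvd [:of_nat n:] \<or> p dvd qX"
      using prime_dvd_power[OF \<open>prime p\<close>] by (simp only: prime_dvd_mult_iff[OF \<open>prime p\<close>]) blast
    moreover have "p dvd qintP n"
      using sq by (simp add: power2_eq_square dvd_mult_left)
    ultimately have "p dvd 1"
      using const_dvd_imp_unit[OF _ coeff] var_dvd_imp_unit[OF _ coeff] assms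
      unfolding qX_def by auto
    then show False
      using \<open>prime p\<close> by simp
  qed
  moreover have "qintP n \<noteq> 0"
    using coeff_qintP_0[OF assms] by auto
  ultimately show ?thesis
    by (simp add: squarefree_factorial_semiring)
qed

text \<open>With \<open>qfactor X m = 1 - X q\<^sup>m\<close>, the \<open>k\<close>-th summand of the theorem is \<open>qint (4k - 1)\<close>
  times the product of the first \<open>k\<close> term ratios, the \<open>i\<close>-th of which is \<open>series_arg\<close> times the
  product over the numerator parameters \<open>X \<in> {1, a, 1/a, 1/b, c, d}\<close> of
  \<open>qfactor X (2i - 1) / qfactor (1/X) (2i + 2)\<close> (lemma \<open>summand_closed_form\<close>).\<close>

definition qfactor :: "ratfun5 \<Rightarrow> int \<Rightarrow> ratfun5" where
  "qfactor X m = 1 - X * qv powi m"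

definition params :: "ratfun5 list" where
  "params = [av, inverse av, inverse bv, cv, dv]"

definition series_arg :: ratfun5 where
  "series_arg = bv * qv ^ 7 / (cv * dv)"

definition ratio_num :: "nat \<Rightarrow> ratfun5" where
  "ratio_num i = (\<Prod>X\<leftarrow>1 # params. qfactor X (2 * int i - 1))"

definition ratio_den :: "nat \<Rightarrow> ratfun5" where
  "ratio_den i = (\<Prod>X\<leftarrow>1 # params. qfactor (inverse X) (2 * int i + 2))"

definition term_ratio :: "nat \<Rightarrow> ratfun5" where
  "term_ratio i = series_arg * ratio_num i / ratio_den i"

definition cross_ratio :: "nat \<Rightarrow> nat \<Rightarrow> ratfun5" where
  "cross_ratio i k = series_arg * ratio_num i / ratio_den k"

definition hyp_term :: "nat \<Rightarrow> ratfun5" where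
  "hyp_term k = (\<Prod>i<k. term_ratio i)"

definition summand :: "nat \<Rightarrow> ratfun5" where
  "summand k = qint (4 * int k - 1) * hyp_term k"

lemma qv_nonzero [simp]: "qv \<noteq> 0"
  and av_nonzero [simp]: "av \<noteq> 0" and bv_nonzero [simp]: "bv \<noteq> 0"
  and cv_nonzero [simp]: "cv \<noteq> 0" and dv_nonzero [simp]: "dv \<noteq> 0"
  by (simp_all add: qv_def av_def bv_def cv_def dv_def qX_def aX_def bX_def cX_def dX_def)

lemma qpoch_eq_prod_qfactor_odd: "qpoch (X / qv) (qv ^ 2) k = (\<Prod>j<k. qfactor X (2 * int j - 1))"
proof -
  have "qv powi (2 * int j - 1) = (qv ^ 2) ^ j / qv" for j
  proof -
    have "qv powi (2 * int j) = (qv ^ 2) ^ j"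
      using power_int_of_nat[of qv "2 * j"] by (simp add: power_mult)
    then show ?thesis
      by (simp add: power_int_diff)
  qed
  then show ?thesis
    by (simp add: qpoch_def qfactor_def)
qed

lemma qpoch_eq_prod_qfactor_even: "qpoch (X * qv ^ 2) (qv ^ 2) k = (\<Prod>j<k. qfactor X (2 * int j + 2))"
proof -
  have "qv powi (2 * int j + 2) = qv ^ 2 * (qv ^ 2) ^ j" for j
  proof -
    have "qv powi (2 * int j) = (qv ^ 2) ^ j"
      using power_int_of_nat[of qv "2 * j"] by (simp add: power_mult)
    then show ?thesis
      by (simp add: power_int_add)
  qed
  then show ?thesis
    by (simp add: qpoch_def qfactor_def mult.assoc)
qed

lemma summand_closed_form:
  "qint (4 * int k - 1) *
       (qpoch (av / qv) (qv^2) k * qpoch (1 / (qv * av)) (qv^2) k * qpoch (1 / (qv * bv)) (qv^2) k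
        * qpoch (cv / qv) (qv^2) k * qpoch (dv / qv) (qv^2) k * qpoch (1 / qv) (qv^2) k)
     / (qpoch (qv^2 / av) (qv^2) k * qpoch (av * qv^2) (qv^2) k * qpoch (bv * qv^2) (qv^2) k
        * qpoch (qv^2 / cv) (qv^2) k * qpoch (qv^2 / dv) (qv^2) k * qpoch (qv^2) (qv^2) k)
     * (bv * qv ^ 7 / (cv * dv)) ^ k = summand k"
proof -
  have args: "1 / (qv * av) = inverse av / qv" "1 / (qv * bv) = inverse bv / qv"
    "qv^2 / av = inverse av * qv^2" "qv^2 / cv = inverse cv * qv^2" "qv^2 / dv = inverse dv * qv^2"
    "qpoch (qv^2) (qv^2) k = qpoch (1 * qv^2) (qv^2) k"
    by (simp_all add: field_simps)
  have num: "(\<Prod>j<k. ratio_num j) = qpoch (1 / qv) (qv^2) k * qpoch (av / qv) (qv^2) k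
      * qpoch (inverse av / qv) (qv^2) k * qpoch (inverse bv / qv) (qv^2) k
      * qpoch (cv / qv) (qv^2) k * qpoch (dv / qv) (qv^2) k"
    unfolding qpoch_eq_prod_qfactor_odd by (simp add: ratio_num_def params_def prod.distrib)
  have den: "(\<Prod>j<k. ratio_den j) = qpoch (1 * qv^2) (qv^2) k * qpoch (inverse av * qv^2) (qv^2) k
      * qpoch (av * qv^2) (qv^2) k * qpoch (bv * qv^2) (qv^2) k
      * qpoch (inverse cv * qv^2) (qv^2) k * qpoch (inverse dv * qv^2) (qv^2) k"
    unfolding qpoch_eq_prod_qfactor_even by (simp add: ratio_den_def params_def prod.distrib)
  have "hyp_term k = series_arg ^ k * (\<Prod>j<k. ratio_num j) / (\<Prod>j<k. ratio_den j)"
    by (simp add: hyp_term_def term_ratio_def prod.distrib prod_dividef)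
  then show ?thesis
    unfolding args summand_def num den series_arg_def by (simp add: mult_ac)
qed

lemma qint_eq_qfactor: "qint m = qfactor 1 m / qfactor 1 1"
  by (simp add: qint_def qfactor_def)

lemma qint_reflect: "qint (- m) = - (qv powi (- m) * qint m)"
proof -
  have "1 - qv powi (- m) = - (qv powi (- m) * (1 - qv powi m))"
    by (simp add: power_int_minus field_simps)
  then show ?thesis
    by (simp add: qint_def)
qed

lemma qfactor_reflect:
  assumes "X \<noteq> 0" "qfactor X m \<noteq> 0"
  shows "qfactor X m / qfactor (inverse X) (- m) = - (X * qv powi m)"
proof -
  have reflect: "qfactor (inverse X) (- m) * - (X * qv powi m) = qfactor X m"
    using assms(1) by (simp add: qfactor_def power_int_minus field_simps)
  then have "qfactor (inverse X) (- m) \<noteq> 0"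
    using assms(2) by auto
  with reflect show ?thesis
    by (metis nonzero_mult_div_cancel_left)
qed

lemma series_arg_reflect: "series_arg * (\<Prod>X\<leftarrow>1 # params. - (X * qv powi m)) = qv powi (6 * m + 7)"
proof -
  have "series_arg * (\<Prod>X\<leftarrow>1 # params. - (X * qv powi m)) = qv powi 7 * (qv powi m) ^ 6"
    by (simp add: series_arg_def params_def field_simps eval_nat_numeral)
  also have "\<dots> = qv powi (6 * m + 7)"
    by (simp add: power_int_power' power_int_add mult.commute)
  finally show ?thesis .
qed

lemma hyp_term_Suc: "hyp_term (Suc k) = hyp_term k * term_ratio k"
  by (simp add: hyp_term_def)

lemma term_ratio_mult_eq_cross_ratio: "term_ratio i * term_ratio k = cross_ratio i k * cross_ratio k i"
  by (simp add: term_ratio_def cross_ratio_def divide_inverse mult_ac)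

section \<open>The sum modulo a prime divisor of [n]\<close>

locale qint_prime_divisor = prime_localization p for p :: mpoly5 +
  fixes n :: nat
  assumes dvd_qintP: "p dvd qintP n" and n_gt_1: "1 < n" and odd_n: "odd n"
begin

lemma not_dvd_const: "w \<noteq> 0 \<Longrightarrow> \<not> p dvd [:w:]"
  using const_dvd_imp_unit[OF dvd_qintP] coeff_qintP_0 n_gt_1 prime
  by (auto simp: prime_elem_def)

lemma not_loc_dvd_of_nat:
  assumes "k \<noteq> 0"
  shows "\<not> loc_dvd (of_nat k)"
proof -
  have "(of_nat k :: int poly poly poly poly) \<noteq> 0"
    using assms by simp
  then have "\<not> p dvd of_nat k"
    using not_dvd_const by (simp only: of_nat_poly)
  then show ?thesis
    using loc_dvd_to_fract_iff[of "of_nat k"] unfolding to_fract_of_nat by blast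
qed

lemma loc_unit_qv: "loc_unit qv"
  using var_dvd_imp_unit[OF dvd_qintP] coeff_qintP_0 n_gt_1 prime
  by (auto simp: loc_unit_def qv_def qX_def prime_elem_def)

lemma loc_cong_qv_power_n: "loc_cong (qv ^ n) 1"
proof -
  have "loc_dvd (to_fract (1 - qX ^ n))"
    using dvd_trans[OF dvd_qintP qintP_dvd_one_minus_qX_power] by (simp only: loc_dvd_to_fract_iff)
  then show ?thesis
    using loc_dvd_minus unfolding loc_cong_def by (fastforce simp: to_fract_power qv_def)
qed

text \<open>The prime \<open>p\<close> divides the cyclotomic polynomial \<open>\<Phi>\<^sub>t(q)\<close>.\<close>

definition t :: nat where
  "t = loc_order qv"

lemma loc_cong_qv_power_int_one_iff: "loc_cong (qv powi m) 1 \<longleftrightarrow> int t dvd m"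
  using loc_cong_power_int_one_iff[OF loc_unit_qv _ loc_cong_qv_power_n] n_gt_1
  by (simp add: t_def)

lemma loc_cong_qv_power_int: "int t dvd m - m' \<Longrightarrow> loc_cong (qv powi m) (qv powi m')"
  using loc_cong_power_int[OF loc_unit_qv _ loc_cong_qv_power_n] n_gt_1
  by (simp add: t_def)

lemma t_dvd_n: "t dvd n"
  using loc_cong_qv_power_int_one_iff[of "int n"] loc_cong_qv_power_n by simp

lemma odd_t: "odd t"
  using t_dvd_n odd_n dvd_trans by blast

lemma t_ge_3: "3 \<le> t"
proof -
  have "t \<noteq> 1"
  proof
    assume "t = 1"
    then have "loc_cong qv 1"
      using loc_cong_qv_power_int_one_iff[of 1] by simp
    then have "loc_cong (\<Sum>i<n. qv ^ i) (\<Sum>i<n. 1)"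
      using loc_cong_power[of qv 1] loc_unit_qv
      by (intro loc_cong_sum) (simp add: loc_unit_imp_loc_int)
    moreover have "loc_dvd (\<Sum>i<n. qv ^ i)"
      using dvd_qintP loc_dvd_to_fract_iff[of "qintP n"]
      by (simp add: qintP_def to_fract_power qv_def)
    ultimately have "loc_dvd (of_nat n)"
      using loc_cong_loc_dvd by fastforce
    then show False
      using not_loc_dvd_of_nat n_gt_1 by simp
  qed
  moreover have "t \<noteq> 0"
  proof
    assume "t = 0"
    then show False
      using t_dvd_n n_gt_1 by simp
  qed
  ultimately show ?thesis
    using odd_t by presburger
qed

definition N :: nat where
  "N = (t + 1) div 2"

lemma two_N: "2 * int N = int t + 1"
  using odd_t by (auto simp: N_def elim!: oddE)

lemma N_lt_t: "N < t"
  using two_N t_ge_3 by linarith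

definition unit_nonroot :: "ratfun5 \<Rightarrow> bool" where
  "unit_nonroot X \<longleftrightarrow> loc_unit X \<and> \<not> loc_cong (X ^ n) 1"

lemma unit_nonroot_inverse:
  assumes "unit_nonroot X"
  shows "unit_nonroot (inverse X)"
proof -
  have X: "loc_unit X" "\<not> loc_cong (X ^ n) 1"
    using assms by (auto simp: unit_nonroot_def)
  have "\<not> loc_cong (inverse X ^ n) 1"
  proof
    assume "loc_cong (inverse X ^ n) 1"
    then have "loc_cong (inverse (inverse X ^ n)) (inverse 1)"
      using X(1) by (intro loc_cong_inverse) auto
    with X(2) show False
      by (simp add: power_inverse)
  qed
  with X(1) show ?thesis
    by (simp add: unit_nonroot_def loc_unit_inverse)
qed

lemma unit_nonroot_const:
  fixes w :: "int poly poly poly poly"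
  assumes "w \<noteq> 0" "\<not> w dvd 1"
  shows "unit_nonroot (to_fract [:w:])"
proof -
  have "w ^ n \<noteq> 1"
  proof
    assume "w ^ n = 1"
    then have "w * w ^ (n - 1) = 1"
      using n_gt_1 by (simp add: power_eq_if split: if_splits)
    then show False
      using assms(2) dvd_triv_left[of w "w ^ (n - 1)"] by simp
  qed
  then have "\<not> loc_dvd (to_fract [:w ^ n - 1:])"
    by (simp only: loc_dvd_to_fract_iff) (simp add: not_dvd_const)
  moreover have "[:w ^ n - 1:] = [:w:] ^ n - 1"
    using diff_pCons[of "w ^ n" 0 1 0] by (simp add: poly_const_pow pCons_one)
  then have "to_fract [:w ^ n - 1:] = to_fract [:w:] ^ n - 1"
    by (simp add: to_fract_power)
  ultimately show ?thesis
    using not_dvd_const[OF assms(1)] by (simp add: unit_nonroot_def loc_unit_def loc_cong_def)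
qed

lemma loc_int_qfactor: "loc_int X \<Longrightarrow> loc_int (qfactor X m)"
  using loc_unit_qv
  by (simp add: qfactor_def loc_int_diff loc_int_mult loc_unit_imp_loc_int loc_unit_power_int)

lemma loc_unit_qfactor:
  assumes "unit_nonroot X"
  shows "loc_unit (qfactor X m)"
proof -
  have X: "loc_unit X" "\<not> loc_cong (X ^ n) 1"
    using assms by (auto simp: unit_nonroot_def)
  have "\<not> loc_dvd (qfactor X m)"
  proof
    assume "loc_dvd (qfactor X m)"
    then have "loc_cong (X * qv powi m) 1"
      using loc_dvd_minus by (fastforce simp: qfactor_def loc_cong_def)
    then have "loc_cong ((X * qv powi m) ^ n) 1"
      using loc_cong_power[of _ 1 n] X(1) loc_unit_qv
      by (fastforce simp: loc_unit_imp_loc_int loc_unit_mult loc_unit_power_int)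
    moreover have "loc_cong (X ^ n * qv powi (m * int n)) (X ^ n * 1)"
      using loc_cong_qv_power_int[of "m * int n" 0] t_dvd_n X(1)
      by (intro loc_cong_mult_left) (auto simp: loc_unit_imp_loc_int loc_unit_power)
    ultimately have "loc_cong (X ^ n) 1"
      by (simp add: power_mult_distrib power_int_power')
        (meson loc_cong_sym loc_cong_trans)
    with X(2) show False ..
  qed
  then show ?thesis
    using loc_int_qfactor X(1) by (simp add: loc_unit_def loc_unit_imp_loc_int)
qed

lemma unit_nonroot_params: "X \<in> set params \<Longrightarrow> unit_nonroot X"
proof -
  have "unit_nonroot av" "unit_nonroot bv" "unit_nonroot cv" "unit_nonroot dv"
    unfolding av_def aX_def bv_def bX_def cv_def cX_def dv_def dX_def
    by (rule unit_nonroot_const; simp add: is_unit_const_poly_iff is_unit_poly_iff)+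
  then show "X \<in> set params \<Longrightarrow> unit_nonroot X"
    by (auto simp: params_def unit_nonroot_inverse)
qed

lemma loc_dvd_qfactor_one_iff: "loc_dvd (qfactor 1 m) \<longleftrightarrow> int t dvd m"
proof -
  have "loc_dvd (qfactor 1 m) \<longleftrightarrow> loc_cong (qv powi m) 1"
    using loc_dvd_minus_iff[of "qv powi m - 1"] by (simp add: qfactor_def loc_cong_def)
  then show ?thesis
    by (simp add: loc_cong_qv_power_int_one_iff)
qed

lemma loc_cong_qfactor:
  assumes "loc_int X" "int t dvd m - m'"
  shows "loc_cong (qfactor X m) (qfactor X m')"
  unfolding qfactor_def
  using assms loc_cong_qv_power_int by (intro loc_cong_diff loc_cong_mult_left) auto

lemma loc_unit_params_qfactor:
  assumes "X \<in> set (1 # params)" "\<not> int t dvd m"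
  shows "loc_unit (qfactor X m)" "loc_unit (qfactor (inverse X) m)"
  using assms loc_int_qfactor[of 1 m] loc_dvd_qfactor_one_iff[of m]
    loc_unit_qfactor unit_nonroot_params unit_nonroot_inverse
  by (auto simp: loc_unit_def)

lemma loc_int_params:
  assumes "X \<in> set (1 # params)"
  shows "loc_int X" "loc_int (inverse X)"
  using assms unit_nonroot_params unit_nonroot_inverse
  by (auto simp: unit_nonroot_def loc_unit_def)

lemma loc_unit_series_arg: "loc_unit series_arg"
proof -
  have "loc_unit av" "loc_unit (inverse bv)" "loc_unit cv" "loc_unit dv"
    using unit_nonroot_params by (auto simp: params_def unit_nonroot_def)
  then show ?thesis
    using loc_unit_qv loc_unit_inverse[of "inverse bv"]
    by (simp add: series_arg_def loc_unit_divide loc_unit_mult loc_unit_power)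
qed

lemma int_t_dvd_double_iff: "int t dvd 2 * x \<longleftrightarrow> int t dvd x"
  using odd_t by (simp add: coprime_dvd_mult_right_iff coprime_commute)

lemma ratio_num_eq: "ratio_num i = qfactor 1 (2 * int i - 1) * (\<Prod>X\<leftarrow>params. qfactor X (2 * int i - 1))"
  by (simp add: ratio_num_def)

lemma ratio_den_eq: "ratio_den i = qfactor 1 (2 * int i + 2) * (\<Prod>X\<leftarrow>params. qfactor (inverse X) (2 * int i + 2))"
  by (simp add: ratio_den_def)

lemma loc_unit_params_prod:
  "loc_unit (\<Prod>X\<leftarrow>params. qfactor X m)" "loc_unit (\<Prod>X\<leftarrow>params. qfactor (inverse X) m)"
  using loc_unit_qfactor unit_nonroot_params unit_nonroot_inverse
  by auto

lemma loc_int_ratio_num: "loc_int (ratio_num i)"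
  unfolding ratio_num_def using loc_int_params by (auto intro: loc_int_qfactor)

lemma loc_unit_ratio_num: "\<not> int t dvd 2 * int i - 1 \<Longrightarrow> loc_unit (ratio_num i)"
  unfolding ratio_num_eq using loc_unit_params_prod loc_unit_params_qfactor[of 1] by (simp add: loc_unit_mult)

lemma loc_unit_ratio_den:
  assumes "\<not> t dvd Suc i"
  shows "loc_unit (ratio_den i)"
proof -
  have "\<not> int t dvd int (Suc i)"
    using assms int_dvd_int_iff by blast
  then have "\<not> int t dvd 2 * int (Suc i)"
    using int_t_dvd_double_iff by blast
  then have "\<not> int t dvd 2 * int i + 2"
    by (simp add: algebra_simps)
  then show ?thesis
    unfolding ratio_den_eq using loc_unit_params_prod loc_unit_params_qfactor[of 1] by (simp add: loc_unit_mult)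
qed

lemma ratio_num_periodic: "loc_cong (ratio_num (j * t + i)) (ratio_num i)"
  unfolding ratio_num_def using loc_int_params
  by (intro loc_cong_prod_list) (auto intro!: loc_cong_qfactor loc_int_qfactor simp: algebra_simps)

lemma ratio_den_periodic: "loc_cong (ratio_den (j * t + i)) (ratio_den i)"
  unfolding ratio_den_def using loc_int_params
  by (intro loc_cong_prod_list) (auto intro!: loc_cong_qfactor loc_int_qfactor simp: algebra_simps)

lemma loc_int_term_ratio: "\<not> t dvd Suc i \<Longrightarrow> loc_int (term_ratio i)"
  unfolding term_ratio_def using loc_unit_series_arg loc_int_ratio_num loc_unit_ratio_den
  by (simp add: loc_int_divide loc_int_mult loc_unit_imp_loc_int)

lemma term_ratio_periodic:
  assumes "\<not> t dvd Suc i"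
  shows "loc_cong (term_ratio (j * t + i)) (term_ratio i)"
proof -
  have "\<not> t dvd Suc (j * t + i)"
    using assms dvd_add_times_triv_left_iff[of t j "Suc i"] by simp
  then show ?thesis
    unfolding term_ratio_def using loc_unit_series_arg loc_int_ratio_num
    by (intro loc_cong_divide loc_cong_mult_left ratio_num_periodic ratio_den_periodic
        loc_int_mult loc_unit_ratio_den) (auto simp: loc_unit_imp_loc_int)
qed

lemma not_dvd_odd_below_N:
  assumes "i < N"
  shows "\<not> int t dvd 2 * int i - 1"
proof (rule not_dvd_if_abs_less)
  show "2 * int i - 1 \<noteq> 0"
    by presburger
  have "int i < int N"
    using assms by simp
  then show "\<bar>2 * int i - 1\<bar> < int t"
    using two_N t_ge_3 by (auto simp: abs_less_iff)
qed

lemma not_dvd_Suc_below_N: "i < N \<Longrightarrow> \<not> t dvd Suc i"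
  using N_lt_t by (auto dest: dvd_imp_le)

lemma loc_unit_term_ratio:
  assumes "i < N"
  shows "loc_unit (term_ratio i)"
proof -
  have "\<not> int t dvd 2 * int i - 1" "\<not> t dvd Suc i"
    using assms not_dvd_odd_below_N not_dvd_Suc_below_N by auto
  then show ?thesis
    unfolding term_ratio_def using loc_unit_series_arg loc_unit_ratio_num loc_unit_ratio_den
    by (simp add: loc_unit_divide loc_unit_mult)
qed

lemma loc_dvd_term_ratio_N:
  assumes "Suc N < t"
  shows "loc_dvd (term_ratio N)"
proof -
  have "loc_dvd (qfactor 1 (2 * int N - 1))"
    using two_N loc_dvd_qfactor_one_iff by simp
  then have "loc_dvd (ratio_num N)"
    unfolding ratio_num_eq using loc_unit_params_prod
    by (simp add: loc_dvd_mult_right loc_unit_imp_loc_int)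
  moreover have "loc_unit (ratio_den N)"
    using assms by (intro loc_unit_ratio_den) (auto dest: dvd_imp_le)
  ultimately show ?thesis
    unfolding term_ratio_def divide_inverse using loc_unit_series_arg
    by (simp add: loc_dvd_mult_left loc_dvd_mult_right loc_unit_imp_loc_int loc_unit_inverse)
qed

lemma loc_int_cross_ratio: "\<not> t dvd Suc k \<Longrightarrow> loc_int (cross_ratio i k)"
  unfolding cross_ratio_def using loc_unit_series_arg loc_int_ratio_num loc_unit_ratio_den
  by (simp add: loc_int_divide loc_int_mult loc_unit_imp_loc_int)

text \<open>Since \<open>2 N - 1 = t\<close>, pairing the numerator of the \<open>i\<close>-th ratio with the denominator of the
  \<open>(N - 1 - i)\<close>-th one turns each denominator factor into the reflection
  \<open>qfactor (1/X) (1 - 2 i)\<close> of the numerator factor \<open>qfactor X (2 i - 1)\<close> modulo \<open>p\<close>.\<close>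

lemma qfactor_quotient_reflect:
  assumes "X \<in> set (1 # params)" "\<not> int t dvd m" "m' + m = int t"
  shows "loc_cong (qfactor X m / qfactor (inverse X) m') (- (X * qv powi m))"
    and "loc_int (qfactor X m / qfactor (inverse X) m')"
proof -
  have "\<not> int t dvd m'"
    using assms(2,3) dvd_add_right_iff[of "int t" m' m] by auto
  then have units: "loc_unit (qfactor X m)" "loc_unit (qfactor (inverse X) m')"
    using loc_unit_params_qfactor[OF assms(1)] assms(2) by auto
  then show "loc_int (qfactor X m / qfactor (inverse X) m')"
    by (simp add: loc_int_divide loc_unit_imp_loc_int)
  have "loc_cong (qfactor X m / qfactor (inverse X) m') (qfactor X m / qfactor (inverse X) (- m))"
    using units loc_int_params[OF assms(1)] assms(3)
    by (intro loc_cong_divide loc_cong_qfactor) (auto simp: loc_unit_imp_loc_int)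
  moreover have "X \<noteq> 0"
    using assms(1) by (auto simp: params_def)
  ultimately show "loc_cong (qfactor X m / qfactor (inverse X) m') (- (X * qv powi m))"
    using units qfactor_reflect[of X m] loc_unit_imp_nonzero by simp
qed

lemma cross_ratio_reflect:
  assumes "i < N"
  shows "loc_cong (cross_ratio i (N - Suc i)) (qv powi (12 * int i + 1))"
proof -
  define m where "m = 2 * int i - 1"
  define m' where "m' = 2 * int (N - Suc i) + 2"
  have m: "\<not> int t dvd m" "m' + m = int t"
    using not_dvd_odd_below_N[OF assms] assms two_N by (simp_all add: m_def m'_def)
  have "cross_ratio i (N - Suc i)
      = series_arg * (\<Prod>X\<leftarrow>1 # params. qfactor X m / qfactor (inverse X) m')"
    by (simp only: cross_ratio_def ratio_num_def ratio_den_def prod_list_map_divide m_def m'_def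
        times_divide_eq_right)
  also have "loc_cong \<dots> (series_arg * (\<Prod>X\<leftarrow>1 # params. - (X * qv powi m)))"
    using qfactor_quotient_reflect[OF _ m] loc_unit_series_arg
    by (intro loc_cong_mult_left loc_cong_prod_list) (auto simp: loc_unit_imp_loc_int)
  also have "series_arg * (\<Prod>X\<leftarrow>1 # params. - (X * qv powi m)) = qv powi (6 * m + 7)"
    by (rule series_arg_reflect)
  also have "6 * m + 7 = 12 * int i + 1"
    by (simp add: m_def)
  finally show ?thesis .
qed

lemma loc_int_hyp_term: "r < t \<Longrightarrow> loc_int (hyp_term r)"
  unfolding hyp_term_def by (intro loc_int_prod loc_int_term_ratio) (auto dest: dvd_imp_le)

lemma loc_int_qfactor_one_quotient:
  assumes "b \<noteq> 0"
  shows "loc_int (qfactor 1 (int (t * a)) / qfactor 1 (int (t * b)))"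
proof -
  have "qfactor 1 (int (t * k)) = 1 - (qv ^ t) ^ k" for k
    by (simp only: qfactor_def power_int_of_nat power_mult mult_1)
  moreover have "loc_cong (qv ^ t) 1"
    using loc_cong_qv_power_int_one_iff[of "int t"] by simp
  ultimately show ?thesis
    using loc_int_geometric_quotient[of "qv ^ t" b a] loc_unit_qv not_loc_dvd_of_nat[OF assms]
    by (simp add: loc_unit_imp_loc_int loc_unit_power)
qed

text \<open>In a block of \<open>t\<close> consecutive ratios, the numerator factor 1 - q^(t(2j+1)) at \<open>r = N\<close> is
  balanced by the denominator factor 1 - q^(t(2j+2)) at \<open>r = t - 1\<close>: their quotient is
  [2j+1]/[2j+2] in base \<open>q\<^sup>t \<equiv> 1\<close>, hence \<open>p\<close>-integral.\<close>

lemma loc_unit_block_ratio_den: "loc_unit (\<Prod>r<t - 1. ratio_den (j * t + r))"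
proof -
  have "\<not> t dvd Suc (j * t + r)" if "r < t - 1" for r
    using that dvd_add_times_triv_left_iff[of t j "Suc r"] by (auto dest: dvd_imp_le)
  then show ?thesis
    by (intro loc_unit_prod loc_unit_ratio_den) auto
qed

lemma loc_int_block_product: "loc_int (\<Prod>r<t. term_ratio (j * t + r))"
proof -
  define a where "a = j * t"
  define QA QB where "QA = qfactor 1 (int (t * (2 * j + 1)))"
    and "QB = qfactor 1 (int (t * (2 * j + 2)))"
  define PA PB where "PA = (\<Prod>X\<leftarrow>params. qfactor X (int (t * (2 * j + 1))))"
    and "PB = (\<Prod>X\<leftarrow>params. qfactor (inverse X) (int (t * (2 * j + 2))))"
  define RN RD where "RN = (\<Prod>r\<in>{..<t} - {N}. ratio_num (a + r))"
    and "RD = (\<Prod>r<t - 1. ratio_den (a + r))"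
  have "2 * int (a + N) - 1 = int (t * (2 * j + 1))"
    using two_N by (simp add: a_def algebra_simps)
  then have num: "(\<Prod>r<t. ratio_num (a + r)) = QA * PA * RN"
    using N_lt_t by (simp add: prod.remove RN_def QA_def PA_def ratio_num_eq)
  have "2 * int (a + (t - 1)) + 2 = int (t * (2 * j + 2))"
    using t_ge_3 by (simp add: a_def algebra_simps)
  moreover have "{..<t} = insert (t - 1) {..<t - 1}"
    using t_ge_3 by auto
  ultimately have den: "(\<Prod>r<t. ratio_den (a + r)) = QB * PB * RD"
    by (simp add: RD_def QB_def PB_def ratio_den_eq)
  have "loc_int RN"
    unfolding RN_def by (intro loc_int_prod loc_int_ratio_num)
  moreover have "loc_unit RD"
    unfolding RD_def a_def by (rule loc_unit_block_ratio_den)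
  moreover have "loc_unit PA" "loc_unit PB"
    unfolding PA_def PB_def by (rule loc_unit_params_prod)+
  ultimately have "loc_int (series_arg ^ t * PA * RN / (PB * RD))"
    using loc_unit_series_arg
    by (intro loc_int_divide loc_int_mult loc_unit_mult) (auto simp: loc_unit_imp_loc_int loc_unit_power)
  moreover have "loc_int (QA / QB)"
    unfolding QA_def QB_def by (rule loc_int_qfactor_one_quotient) simp
  ultimately have "loc_int (series_arg ^ t * PA * RN / (PB * RD) * (QA / QB))"
    by (rule loc_int_mult)
  moreover have "(\<Prod>r<t. term_ratio (a + r)) = series_arg ^ t * PA * RN / (PB * RD) * (QA / QB)"
    by (simp add: term_ratio_def prod.distrib prod_dividef num den mult_ac)
  ultimately show ?thesis
    by (simp add: a_def)
qed

lemma loc_int_hyp_term_multiple: "loc_int (hyp_term (j * t))"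
proof (induction j)
  case (Suc j)
  have "hyp_term (Suc j * t) = hyp_term (j * t + t)"
    by (simp add: add.commute)
  also have "\<dots> = hyp_term (j * t) * (\<Prod>r<t. term_ratio (j * t + r))"
    unfolding hyp_term_def by (rule prod_lessThan_add)
  finally have "hyp_term (Suc j * t) = hyp_term (j * t) * (\<Prod>r<t. term_ratio (j * t + r))" .
  then show ?case
    using Suc loc_int_block_product by (simp add: loc_int_mult)
qed (simp add: hyp_term_def)

lemma hyp_term_block: "r < t \<Longrightarrow> loc_cong (hyp_term (j * t + r)) (hyp_term (j * t) * hyp_term r)"
proof (induction r)
  case 0
  then show ?case
    by (simp add: hyp_term_def)
next
  case (Suc r)
  then have IH: "loc_cong (hyp_term (j * t + r)) (hyp_term (j * t) * hyp_term r)"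
    by simp
  have "\<not> t dvd Suc r"
    using Suc.prems by (auto dest: dvd_imp_le)
  then have "\<not> t dvd Suc (j * t + r)"
    using dvd_add_times_triv_left_iff[of t j "Suc r"] by simp
  moreover have "loc_int (hyp_term (j * t + r))"
    using IH Suc.prems loc_int_hyp_term_multiple loc_int_hyp_term loc_cong_loc_int loc_cong_sym
    by (meson Suc_lessD loc_int_mult)
  ultimately have "loc_cong (hyp_term (j * t + r) * term_ratio (j * t + r))
      (hyp_term (j * t) * hyp_term r * term_ratio r)"
    using IH term_ratio_periodic[OF \<open>\<not> t dvd Suc r\<close>] by (intro loc_cong_mult loc_int_term_ratio)
  then show ?case
    by (simp add: hyp_term_Suc mult.assoc)
qed

lemma hyp_term_N: "loc_cong (hyp_term N) (qv powi (- 1))"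
proof -
  have "hyp_term N = (\<Prod>i<N. series_arg * ratio_num i) / (\<Prod>i<N. ratio_den i)"
    by (simp add: hyp_term_def term_ratio_def prod_dividef)
  also have "(\<Prod>i<N. ratio_den i) = (\<Prod>i<N. ratio_den (N - Suc i))"
    by (rule prod.nat_diff_reindex[symmetric])
  also have "(\<Prod>i<N. series_arg * ratio_num i) / \<dots> = (\<Prod>i<N. cross_ratio i (N - Suc i))"
    by (simp add: cross_ratio_def prod_dividef)
  also have "loc_cong \<dots> (\<Prod>i<N. qv powi (12 * int i + 1))"
  proof (intro loc_cong_prod conjI)
    fix i
    assume "i \<in> {..<N}"
    then show "loc_cong (cross_ratio i (N - Suc i)) (qv powi (12 * int i + 1))"
      and "loc_int (cross_ratio i (N - Suc i))"
      using cross_ratio_reflect loc_int_cross_ratio not_dvd_Suc_below_N by auto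
  qed
  also have "(\<Prod>i<N. qv powi (12 * int i + 1)) = qv powi (\<Sum>i<N. 12 * int i + 1)"
    by (simp add: prod_power_int)
  also have "(\<Sum>i<k. 12 * int i + 1) = 6 * int k * (int k - 1) + int k" for k
    by (induction k) (simp_all add: algebra_simps)
  also have "loc_cong (qv powi (6 * int N * (int N - 1) + int N)) (qv powi (- 1))"
  proof (rule loc_cong_qv_power_int)
    have t: "int t = 2 * int N - 1"
      using two_N by simp
    have "6 * int N * (int N - 1) + int N - - 1 = int t * (3 * int N - 1)"
      unfolding t by (simp add: algebra_simps)
    then show "int t dvd 6 * int N * (int N - 1) + int N - - 1"
      by simp
  qed
  finally show ?thesis .
qed

lemma term_ratio_pair:
  assumes "r < N"
  shows "loc_cong (term_ratio r * term_ratio (N - Suc r)) (qv powi (- 4))"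
proof -
  define k where "k = N - Suc r"
  have k: "k < N" "N - Suc k = r"
    using assms by (auto simp: k_def)
  have "loc_cong (cross_ratio r k * cross_ratio k r) (qv powi (12 * int r + 1) * qv powi (12 * int k + 1))"
    using cross_ratio_reflect[OF assms, folded k_def] cross_ratio_reflect[OF k(1), unfolded k(2)]
      loc_int_cross_ratio not_dvd_Suc_below_N assms k(1)
    by (intro loc_cong_mult) auto
  then have "loc_cong (term_ratio r * term_ratio k) (qv powi (12 * int r + 1) * qv powi (12 * int k + 1))"
    by (simp only: term_ratio_mult_eq_cross_ratio)
  also have "qv powi (12 * int r + 1) * qv powi (12 * int k + 1) = qv powi (12 * int N - 10)"
    using assms by (simp add: k_def algebra_simps flip: power_int_add)
  also have "loc_cong \<dots> (qv powi (- 4))"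
  proof (rule loc_cong_qv_power_int)
    have "12 * int N - 10 - - 4 = int t * 6"
      using two_N by simp
    then show "int t dvd 12 * int N - 10 - - 4"
      by simp
  qed
  finally show ?thesis
    by (simp add: k_def)
qed

lemma hyp_term_reflect: "r \<le> N \<Longrightarrow> loc_cong (hyp_term (N - r)) (qv powi (4 * int r - 1) * hyp_term r)"
proof (induction r)
  case 0
  then show ?case
    using hyp_term_N by (simp add: hyp_term_def)
next
  case (Suc r)
  define k where "k = N - Suc r"
  have r: "r < N" and k: "k < N" "N - r = Suc k"
    using Suc.prems by (auto simp: k_def)
  have h: "loc_int (hyp_term r)"
    using r N_lt_t loc_int_hyp_term by simp
  define Y where "Y = qv powi (4 * int r + 3) * hyp_term (Suc r)"
  have "loc_cong (hyp_term k * term_ratio k) (qv powi (4 * int r - 1) * hyp_term r)"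
    using Suc.IH r k(2) by (simp add: hyp_term_Suc)
  also have "qv powi (4 * int r - 1) * hyp_term r = (qv powi (4 * int r + 3) * hyp_term r) * qv powi (- 4)"
    by (simp add: algebra_simps flip: power_int_add)
  also have "loc_cong \<dots> ((qv powi (4 * int r + 3) * hyp_term r) * (term_ratio r * term_ratio k))"
    using term_ratio_pair[OF r] h loc_unit_qv loc_cong_sym
    by (intro loc_cong_mult_left) (auto simp: k_def loc_int_mult loc_unit_imp_loc_int loc_unit_power_int)
  also have "\<dots> = term_ratio k * Y"
    by (simp add: Y_def hyp_term_Suc mult_ac)
  finally have "loc_cong (term_ratio k * hyp_term k) (term_ratio k * Y)"
    by (simp add: mult.commute)
  then have "loc_cong (hyp_term k) Y"
    using loc_unit_term_ratio[OF k(1)] by (rule loc_cong_cancel)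
  then show ?case
    by (simp add: Y_def k_def algebra_simps)
qed

lemma loc_int_qint: "loc_int (qint m)"
  using loc_int_qfactor[of 1] loc_dvd_qfactor_one_iff[of 1] t_ge_3
  by (simp add: qint_eq_qfactor loc_int_divide loc_unit_def)

lemma qint_periodic: "int t dvd m - m' \<Longrightarrow> loc_cong (qint m) (qint m')"
  using loc_int_qfactor[of 1] loc_dvd_qfactor_one_iff[of 1] t_ge_3
  unfolding qint_eq_qfactor
  by (intro loc_cong_divide loc_cong_qfactor) (auto simp: loc_unit_def)

lemma summand_reflect:
  assumes "r \<le> N"
  shows "loc_cong (summand (N - r)) (- summand r)"
proof -
  have "4 * int (N - r) - 1 - - (4 * int r - 1) = 2 * int t"
    using assms two_N by simp
  then have "loc_cong (qint (4 * int (N - r) - 1)) (qint (- (4 * int r - 1)))"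
    by (intro qint_periodic) simp
  then have "loc_cong (summand (N - r)) (qint (- (4 * int r - 1)) * (qv powi (4 * int r - 1) * hyp_term r))"
    unfolding summand_def using hyp_term_reflect[OF assms] loc_int_qint loc_int_hyp_term assms N_lt_t
    by (intro loc_cong_mult) auto
  also have "qint (- (4 * int r - 1)) * (qv powi (4 * int r - 1) * hyp_term r)
      = - ((qv powi (- (4 * int r - 1)) * qv powi (4 * int r - 1)) * (qint (4 * int r - 1) * hyp_term r))"
    unfolding qint_reflect[of "4 * int r - 1"] by (simp only: mult_ac mult_minus_left mult_minus_right)
  also have "\<dots> = - summand r"
    unfolding power_int_minus summand_def by simp
  finally show ?thesis .
qed

lemma loc_dvd_sum_summand_upto_N: "loc_dvd (\<Sum>r\<le>N. summand r)"
proof -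
  define S where "S = (\<Sum>r\<le>N. summand r)"
  have "S = (\<Sum>r<Suc N. summand (Suc N - Suc r))"
    unfolding S_def lessThan_Suc_atMost[symmetric] by (rule sum.nat_diff_reindex[symmetric])
  also have "\<dots> = (\<Sum>r\<le>N. summand (N - r))"
    by (simp add: lessThan_Suc_atMost)
  also have "loc_cong \<dots> (\<Sum>r\<le>N. - summand r)"
    using summand_reflect by (intro loc_cong_sum) simp
  also have "(\<Sum>r\<le>N. - summand r) = - S"
    unfolding S_def by (rule sum_negf)
  finally have "loc_dvd (S - - S)"
    unfolding loc_cong_def .
  then have "loc_dvd (of_nat 2 * S)"
    by (simp add: algebra_simps)
  moreover have "loc_unit (of_nat 2)"
    using not_loc_dvd_of_nat[of 2] loc_int_of_nat[of 2] unfolding loc_unit_def by force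
  ultimately show ?thesis
    unfolding S_def by (simp only: loc_dvd_mult_unit_iff)
qed

lemma loc_dvd_summand_high:
  assumes "N < r" "r < t"
  shows "loc_dvd (summand r)"
proof -
  have "loc_dvd (hyp_term r)"
    unfolding hyp_term_def
  proof (rule loc_dvd_prod)
    show "loc_dvd (term_ratio N)"
      using assms by (intro loc_dvd_term_ratio_N) simp
    show "loc_int (term_ratio i)" if "i \<in> {..<r}" for i
      using that assms by (intro loc_int_term_ratio) (auto dest: dvd_imp_le)
  qed (use assms in auto)
  then show ?thesis
    unfolding summand_def by (intro loc_dvd_mult_left loc_int_qint)
qed

lemma summand_block:
  assumes "r < t"
  shows "loc_cong (summand (j * t + r)) (hyp_term (j * t) * summand r)"
proof -
  have "loc_cong (qint (4 * int (j * t + r) - 1)) (qint (4 * int r - 1))"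
    by (intro qint_periodic) (simp add: algebra_simps)
  moreover have "loc_cong (hyp_term (j * t + r)) (hyp_term (j * t) * hyp_term r)"
    using assms by (rule hyp_term_block)
  moreover from this have "loc_int (hyp_term (j * t + r))"
    using assms loc_int_hyp_term_multiple loc_int_hyp_term loc_cong_loc_int loc_cong_sym loc_int_mult
    by blast
  ultimately have "loc_cong (summand (j * t + r)) (qint (4 * int r - 1) * (hyp_term (j * t) * hyp_term r))"
    unfolding summand_def using loc_int_qint by (intro loc_cong_mult)
  then show ?thesis
    by (simp add: summand_def mult_ac)
qed

lemma loc_dvd_block_sum:
  assumes "N \<le> R" "R < t"
  shows "loc_dvd (\<Sum>r\<le>R. summand (j * t + r))"
proof -
  have split: "{..R} = {..N} \<union> {N<..R}"
    using assms by auto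
  have "(\<Sum>r\<le>R. summand r) = (\<Sum>r\<le>N. summand r) + (\<Sum>r\<in>{N<..R}. summand r)"
    unfolding split by (rule sum.union_disjoint) auto
  moreover have "loc_dvd (\<Sum>r\<in>{N<..R}. summand r)"
    using assms by (intro loc_dvd_sum loc_dvd_summand_high) auto
  ultimately have "loc_dvd (hyp_term (j * t) * (\<Sum>r\<le>R. summand r))"
    using loc_dvd_sum_summand_upto_N loc_int_hyp_term_multiple
    by (simp add: loc_dvd_add loc_dvd_mult_left)
  moreover have "loc_cong (\<Sum>r\<le>R. summand (j * t + r)) (hyp_term (j * t) * (\<Sum>r\<le>R. summand r))"
    unfolding sum_distrib_left using assms by (intro loc_cong_sum summand_block) auto
  ultimately show ?thesis
    using loc_cong_loc_dvd loc_cong_sym by blast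
qed

lemma loc_dvd_sum_summand:
  assumes "N \<le> R" "R < t"
  shows "loc_dvd (\<Sum>k\<le>J * t + R. summand k)"
  using assms
proof (induction J arbitrary: R)
  case 0
  then show ?case
    using loc_dvd_block_sum[of R 0] by simp
next
  case (Suc J)
  define a where "a = J * t + (t - 1)"
  have a: "Suc (Suc J * t + R) = Suc a + Suc R" "Suc a = Suc J * t"
    using t_ge_3 by (simp_all add: a_def)
  have "(\<Sum>k\<le>Suc J * t + R. summand k) = (\<Sum>k<Suc a + Suc R. summand k)"
    by (simp only: lessThan_Suc_atMost[symmetric] a(1))
  also have "\<dots> = (\<Sum>k<Suc a. summand k) + (\<Sum>r<Suc R. summand (Suc a + r))"
    by (rule sum_lessThan_add)
  also have "\<dots> = (\<Sum>k\<le>a. summand k) + (\<Sum>r\<le>R. summand (Suc J * t + r))"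
    by (simp only: lessThan_Suc_atMost) (simp only: a(2))
  finally have sum: "(\<Sum>k\<le>Suc J * t + R. summand k)
      = (\<Sum>k\<le>a. summand k) + (\<Sum>r\<le>R. summand (Suc J * t + r))" .
  have "loc_dvd (\<Sum>k\<le>a. summand k)"
    using Suc.IH[of "t - 1"] N_lt_t by (simp add: a_def)
  then show ?case
    unfolding sum using loc_dvd_block_sum[OF Suc.prems] by (rule loc_dvd_add)
qed

lemma loc_dvd_sum_summand_upto_M:
  assumes "M = (n + 1) div 2 \<or> M = n - 1"
  shows "loc_dvd (\<Sum>k\<le>M. summand k)"
proof -
  obtain m where n: "n = t * m"
    using t_dvd_n by (rule dvdE)
  then have "odd m"
    using odd_n by simp
  then obtain s where m: "m = 2 * s + 1"
    by (rule oddE)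
  have "int (2 * N) = int (t + 1)"
    using two_N by simp
  then have "2 * N = t + 1"
    by (simp only: of_nat_eq_iff)
  then have "M = s * t + N \<or> M = (2 * s) * t + (t - 1)"
    using assms t_ge_3 by (auto simp: n m algebra_simps)
  then show ?thesis
    using loc_dvd_sum_summand[of N s] loc_dvd_sum_summand[of "t - 1" "2 * s"] N_lt_t by auto
qed

end

theorem lemma3p2:
  fixes n M :: nat
  assumes "n > 1" and "odd n" and "M = (n + 1) div 2 \<or> M = n - 1"
  shows "qcong
    (\<Sum>k=0..M. qint (4 * int k - 1) *
       (qpoch (av / qv) (qv^2) k * qpoch (1 / (qv * av)) (qv^2) k * qpoch (1 / (qv * bv)) (qv^2) k
        * qpoch (cv / qv) (qv^2) k * qpoch (dv / qv) (qv^2) k * qpoch (1 / qv) (qv^2) k)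
     / (qpoch (qv^2 / av) (qv^2) k * qpoch (av * qv^2) (qv^2) k * qpoch (bv * qv^2) (qv^2) k
        * qpoch (qv^2 / cv) (qv^2) k * qpoch (qv^2 / dv) (qv^2) k * qpoch (qv^2) (qv^2) k)
     * (bv * qv ^ 7 / (cv * dv)) ^ k)
    0 (qintP n)"
proof -
  have "prime_localization.loc_dvd p (\<Sum>k\<le>M. summand k)" if "prime p" "p dvd qintP n" for p
  proof -
    interpret qint_prime_divisor p n
      using that assms by unfold_locales simp_all
    show ?thesis
      using assms(3) by (rule loc_dvd_sum_summand_upto_M)
  qed
  moreover have "squarefree (qintP n)"
    using assms(1) by (intro squarefree_qintP) simp
  ultimately obtain a b
    where "b \<noteq> 0" "(\<Sum>k\<le>M. summand k) = Fract a b" "qintP n dvd a" "coprime b (qintP n)"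
    using fract_num_dvd_if_loc_dvd by blast
  then show ?thesis
    unfolding qcong_def summand_closed_form atLeast0AtMost by auto
qed

end
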